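(* Consider the controlled system $\dot x = f(x)+g(x)u$, $y=h(x)$, with $x\in\mathbb{R}^{d_x}$, $u\in\mathbb{R}^{d_u}$, where $f,g,h$ are sufficiently many times differentiable, let $\mathcal{S}\subset\mathbb{R}^{d_x}$ be open and let $i\ge1$ be an integer. Let $x\in\mathcal{S}$ and suppose there exist $L>0$ and a neighborhood $N$ of $x$ such that $$|L_gL_f^{i-1}h(x_a)-L_gL_f^{i-1}h(x_b)|\le L\,|\mathbf{H}_i(x_a)-\mathbf{H}_i(x_b)|\qquad\forall (x_a,x_b)\in N^2.$$ Then for any nonzero $v\in\mathbb{R}^{d_x}$ and any $k\in\{1,\dots,d_u\}$, $$\frac{\partial\mathbf{H}_i}{\partial x}(x)\,v=0\ \Longrightarrow\ \frac{\partial L_{g_k}L_f^{i-1}h}{\partial x}(x)\,v=0.$$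
   Context: $L_f$ is the Lie derivative along $f$, $g_k$ is the $k$-th column of $g$, and $L_g\alpha=(L_{g_1}\alpha,\dots,L_{g_{d_u}}\alpha)$. $\mathbf{H}_i(x)=(h(x),L_fh(x),\dots,L_f^{i-1}h(x))$. *)

theory Defs
  imports "HOL-Analysis.Analysis"
begin

definition lie :: "(real^'n \<Rightarrow> real^'n) \<Rightarrow> (real^'n \<Rightarrow> 'b::real_normed_vector)
                   \<Rightarrow> real^'n \<Rightarrow> 'b" where
  "lie F \<phi> = (\<lambda>z. frechet_derivative \<phi> (at z) (F z))"

definition lie_iter :: "(real^'n \<Rightarrow> real^'n) \<Rightarrow> nat \<Rightarrow> (real^'n \<Rightarrow> 'b::real_normed_vector)
                        \<Rightarrow> real^'n \<Rightarrow> 'b" where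
  "lie_iter f j h = (lie f ^^ j) h"

(* L_g alpha = (L_{g_1} alpha, ..., L_{g_du} alpha), g_k = k-th column of g;
   for vector-valued alpha this is the d_y x d_u matrix whose k-th column is L_{g_k} alpha *)
definition lie_g :: "(real^'n \<Rightarrow> real^'m^'n) \<Rightarrow> (real^'n \<Rightarrow> real^'p) \<Rightarrow> real^'n \<Rightarrow> real^'m^'p" where
  "lie_g g \<alpha> = (\<lambda>z. \<chi> r c. lie (\<lambda>w. column c (g w)) \<alpha> z $ r)"

(* |H_i(xa) - H_i(xb)|, Euclidean norm of the stacked vector
   H_i(x) = (h(x), L_f h(x), ..., L_f^{i-1} h(x)) *)
definition H_dist :: "(real^'n \<Rightarrow> real^'n) \<Rightarrow> (real^'n \<Rightarrow> real^'p) \<Rightarrow> nat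
                      \<Rightarrow> real^'n \<Rightarrow> real^'n \<Rightarrow> real" where
  "H_dist f h i xa xb = sqrt (\<Sum>j<i. (norm (lie_iter f j h xa - lie_iter f j h xb))\<^sup>2)"

end

theory Submission
  imports Defs
begin

(* Along the ray x + t v the Lipschitz hypothesis bounds the difference quotient of
   L_{g_k} L_f^{i-1} h (a column of L_g L_f^{i-1} h, so its norm is dominated by that of the
   matrix) by L times the difference quotient of H_i. The latter tends to 0 when H_i has zero
   derivative in direction v at x, so the directional derivative of L_{g_k} L_f^{i-1} h is 0. *)

lemma has_derivative_imp_directional_quotient:
  fixes F :: "'a::real_normed_vector \<Rightarrow> 'b::real_normed_vector"
  assumes "(F has_derivative D) (at x)"
  shows "((\<lambda>t. (F (x + t *\<^sub>R v) - F x) /\<^sub>R t) \<longlongrightarrow> D v) (at (0::real))"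
proof -
  have "((\<lambda>t::real. x + t *\<^sub>R v) has_derivative (\<lambda>t. t *\<^sub>R v)) (at 0)"
    by (auto intro!: derivative_eq_intros)
  from diff_chain_at[OF this] assms
  have "((\<lambda>t. F (x + t *\<^sub>R v)) has_derivative (\<lambda>t. D (t *\<^sub>R v))) (at 0)"
    by (simp add: o_def)
  moreover have "D (t *\<^sub>R v) = t *\<^sub>R D v" for t
    using assms has_derivative_bounded_linear linear_simps(5) by blast
  ultimately have "((\<lambda>t. norm (F (x + t *\<^sub>R v) - F x - t *\<^sub>R D v) / norm t) \<longlongrightarrow> 0) (at (0::real))"
    unfolding has_derivative_at by simp
  moreover have "\<forall>\<^sub>F t in at 0. norm (F (x + t *\<^sub>R v) - F x - t *\<^sub>R D v) / norm t
      = norm ((F (x + t *\<^sub>R v) - F x) /\<^sub>R t - D v)"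
    unfolding eventually_at_filter
  proof (intro always_eventually allI impI)
    fix t :: real
    assume "t \<noteq> 0"
    then have "F (x + t *\<^sub>R v) - F x - t *\<^sub>R D v = t *\<^sub>R ((F (x + t *\<^sub>R v) - F x) /\<^sub>R t - D v)"
      by (simp add: algebra_simps)
    with \<open>t \<noteq> 0\<close> show "norm (F (x + t *\<^sub>R v) - F x - t *\<^sub>R D v) / norm t
        = norm ((F (x + t *\<^sub>R v) - F x) /\<^sub>R t - D v)"
      by simp
  qed
  ultimately have "((\<lambda>t. norm ((F (x + t *\<^sub>R v) - F x) /\<^sub>R t - D v)) \<longlongrightarrow> 0) (at (0::real))"
    using tendsto_cong by fastforce
  then show ?thesis
    by (simp add: tendsto_norm_zero_iff LIM_zero_iff)
qed

lemma directional_derivative_eq_0_if_dominated: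
  fixes F :: "'a::real_normed_vector \<Rightarrow> 'b::real_normed_vector"
  assumes "(F has_derivative D) (at x)"
    and "\<forall>\<^sub>F t in at 0. norm (F (x + t *\<^sub>R v) - F x) \<le> \<rho> t"
    and "((\<lambda>t. \<rho> t / \<bar>t\<bar>) \<longlongrightarrow> 0) (at (0::real))"
  shows "D v = 0"
proof -
  have "\<forall>\<^sub>F t in at 0. norm ((F (x + t *\<^sub>R v) - F x) /\<^sub>R t) \<le> \<rho> t / \<bar>t\<bar>"
    using assms(2) by eventually_elim (simp add: divide_inverse_commute mult_left_mono)
  from tendsto_le[OF _ assms(3) tendsto_norm[OF has_derivative_imp_directional_quotient[OF assms(1)]] this]
  show ?thesis by simp
qed

lemma L2_set_directional_quotient_tendsto_0:
  fixes F :: "'i \<Rightarrow> 'a::real_normed_vector \<Rightarrow> 'b::real_normed_vector"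
  assumes "\<And>j. j \<in> J \<Longrightarrow> (F j has_derivative D j) (at x)"
    and "\<And>j. j \<in> J \<Longrightarrow> D j v = 0"
  shows "((\<lambda>t. L2_set (\<lambda>j. norm (F j (x + t *\<^sub>R v) - F j x)) J / \<bar>t\<bar>) \<longlongrightarrow> 0) (at (0::real))"
proof -
  have quotient_eq: "L2_set (\<lambda>j. norm (F j (x + t *\<^sub>R v) - F j x)) J / \<bar>t\<bar>
      = L2_set (\<lambda>j. norm ((F j (x + t *\<^sub>R v) - F j x) /\<^sub>R t)) J" for t
    by (simp add: L2_set_right_distrib divide_inverse_commute mult.commute[of _ "inverse _"])
  have "((\<lambda>t. L2_set (\<lambda>j. norm ((F j (x + t *\<^sub>R v) - F j x) /\<^sub>R t)) J)
          \<longlongrightarrow> L2_set (\<lambda>j. norm (D j v)) J) (at (0::real))"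
    unfolding L2_set_def
    by (intro tendsto_intros has_derivative_imp_directional_quotient assms)
  moreover have "L2_set (\<lambda>j. norm (D j v)) J = 0"
    by (simp add: L2_set_def assms(2))
  ultimately show ?thesis
    unfolding quotient_eq by simp
qed

lemma norm_column_le: "norm (column k A) \<le> norm (A :: real^'m^'n)"
  unfolding norm_vec_def[of "column k A"] norm_vec_def[of A]
  by (rule L2_set_mono) (auto simp: column_def component_le_norm_cart)

lemma column_diff: "column k (A - B) = column k A - column k B"
  by (simp add: column_def vec_eq_iff)

lemma lie_column_eq_column_lie_g:
  "lie (\<lambda>w. column k (g w)) \<alpha> = (\<lambda>z. column k (lie_g g \<alpha> z))"
  by (simp add: lie_g_def column_def vec_eq_iff fun_eq_iff)

lemma H_dist_eq_L2_set:
  "H_dist f h i xa xb = L2_set (\<lambda>j. norm (lie_iter f j h xa - lie_iter f j h xb)) {..<i}"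
  by (simp add: H_dist_def L2_set_def)

theorem lemma4:
  fixes f :: "real^'n \<Rightarrow> real^'n" and g :: "real^'n \<Rightarrow> real^'m^'n"
    and h :: "real^'n \<Rightarrow> real^'p" and S :: "(real^'n) set" and i :: nat
    and x :: "real^'n"
  assumes S_open: "open S"
    and i_pos: "i \<ge> 1"
    and H_diff: "\<forall>j<i. lie_iter f j h differentiable_on S"
    and LgH_diff: "\<forall>k. lie (\<lambda>w. column k (g w)) (lie_iter f (i - 1) h) differentiable_on S"
    and x_in: "x \<in> S"
    and lip: "\<exists>L>0. \<exists>N. open N \<and> x \<in> N \<and>
               (\<forall>xa\<in>N. \<forall>xb\<in>N. norm (lie_g g (lie_iter f (i - 1) h) xa - lie_g g (lie_iter f (i - 1) h) xb)
                                 \<le> L * H_dist f h i xa xb)"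
  shows "\<forall>v k. v \<noteq> 0 \<longrightarrow>
           (\<forall>j<i. frechet_derivative (lie_iter f j h) (at x) v = 0) \<longrightarrow>
           frechet_derivative (lie (\<lambda>w. column k (g w)) (lie_iter f (i - 1) h)) (at x) v = 0"
proof (intro allI impI)
  fix v :: "real^'n" and k :: 'm
  assume H_flat: "\<forall>j<i. frechet_derivative (lie_iter f j h) (at x) v = 0"
  define \<Phi> where "\<Phi> = lie_g g (lie_iter f (i - 1) h)"
  define \<phi> where "\<phi> = lie (\<lambda>w. column k (g w)) (lie_iter f (i - 1) h)"
  have \<phi>_eq: "\<phi> z = column k (\<Phi> z)" for z
    by (simp add: \<phi>_def \<Phi>_def lie_column_eq_column_lie_g)
  obtain L N where "open N" "x \<in> N"
    and bound: "\<forall>xa\<in>N. \<forall>xb\<in>N. norm (\<Phi> xa - \<Phi> xb) \<le> L * H_dist f h i xa xb"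
    using lip unfolding \<Phi>_def by blast
  have has_frechet_at_x: "(F has_derivative frechet_derivative F (at x)) (at x)"
    if "F differentiable_on S" for F :: "real^'n \<Rightarrow> real^'p"
    using that S_open x_in differentiable_on_eq_differentiable_at frechet_derivative_works by blast
  have "\<forall>\<^sub>F t in at 0. x + t *\<^sub>R v \<in> N"
    using \<open>open N\<close> \<open>x \<in> N\<close> by (intro topological_tendstoD) (auto intro!: tendsto_eq_intros)
  then have "\<forall>\<^sub>F t in at 0. norm (\<phi> (x + t *\<^sub>R v) - \<phi> x) \<le> L * H_dist f h i (x + t *\<^sub>R v) x"
  proof eventually_elim
    case (elim t)
    have "norm (\<phi> (x + t *\<^sub>R v) - \<phi> x) \<le> norm (\<Phi> (x + t *\<^sub>R v) - \<Phi> x)"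
      unfolding \<phi>_eq column_diff[symmetric] by (rule norm_column_le)
    also have "\<dots> \<le> L * H_dist f h i (x + t *\<^sub>R v) x"
      using bound elim \<open>x \<in> N\<close> by blast
    finally show ?case .
  qed
  moreover have "((\<lambda>t. L * H_dist f h i (x + t *\<^sub>R v) x / \<bar>t\<bar>) \<longlongrightarrow> 0) (at 0)"
    unfolding H_dist_eq_L2_set times_divide_eq_right[symmetric]
    using H_diff H_flat
    by (intro tendsto_mult_right_zero has_frechet_at_x
        L2_set_directional_quotient_tendsto_0[where D = "\<lambda>j. frechet_derivative (lie_iter f j h) (at x)"])
      auto
  moreover have "(\<phi> has_derivative frechet_derivative \<phi> (at x)) (at x)"
    unfolding \<phi>_def using LgH_diff by (blast intro: has_frechet_at_x)
  ultimately show "frechet_derivative \<phi> (at x) v = 0"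
    by (intro directional_derivative_eq_0_if_dominated)
qed

end
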